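(* Let $s\ge1$ and let $a_{ij}$ ($i,j=1,\dots,s$) be scalars satisfying \[ a_{ij}a_{ik} - a_{ij}a_{jk} - a_{ik}a_{kj} = 0\qquad\text{for all } i,j,k\in\{1,\dots,s\}\text{ with } j\neq k. \] Then: (a) for all $i\neq j$, if $a_{ij}\neq0$ then $a_{ji}=0$; (b) for all $i,j,k$, if $a_{ik}\neq0$ and $a_{kj}\neq0$, then $a_{ij}\neq0$. *)

theory Defs
  imports Main
begin

end

theory Submission
  imports Defs
begin

lemma support_asym:
  fixes a :: "'i \<Rightarrow> 'i \<Rightarrow> 'r::{comm_ring, ring_no_zero_divisors}"
  assumes rel: "\<And>i j k. i \<in> I \<Longrightarrow> j \<in> I \<Longrightarrow> k \<in> I \<Longrightarrow> j \<noteq> k \<Longrightarrow>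
              a i j * a i k - a i j * a j k - a i k * a k j = 0"
    and "i \<in> I" "j \<in> I" "i \<noteq> j" "a i j \<noteq> 0"
  shows "a j i = 0"
proof -
  have "a i j * a i i - a i j * a j i - a i i * a i j = 0"
    using rel[of i j i] assms(2-4) by blast
  then have "a i j * a j i = 0"
    by (simp add: algebra_simps)
  then show ?thesis
    using \<open>a i j \<noteq> 0\<close> by simp
qed

lemma support_trans:
  fixes a :: "'i \<Rightarrow> 'i \<Rightarrow> 'r::ring_no_zero_divisors"
  assumes rel: "\<And>i j k. i \<in> I \<Longrightarrow> j \<in> I \<Longrightarrow> k \<in> I \<Longrightarrow> j \<noteq> k \<Longrightarrow>
              a i j * a i k - a i j * a j k - a i k * a k j = 0"
    and "i \<in> I" "j \<in> I" "k \<in> I" "a i k \<noteq> 0" "a k j \<noteq> 0"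
  shows "a i j \<noteq> 0"
proof (cases "j = k")
  case True
  then show ?thesis
    using \<open>a i k \<noteq> 0\<close> by simp
next
  case False
  show ?thesis
  proof
    assume "a i j = 0"
    with rel[of i j k] assms(2-4) False have "a i k * a k j = 0"
      by simp
    with \<open>a i k \<noteq> 0\<close> \<open>a k j \<noteq> 0\<close> show False
      by simp
  qed
qed

theorem lemma2p4:
  fixes s :: nat and a :: "nat \<Rightarrow> nat \<Rightarrow> 'f::field"
  assumes "s \<ge> 1"
    and rel: "\<And>i j k. i \<in> {1..s} \<Longrightarrow> j \<in> {1..s} \<Longrightarrow> k \<in> {1..s} \<Longrightarrow> j \<noteq> k \<Longrightarrow>
              a i j * a i k - a i j * a j k - a i k * a k j = 0"
  shows "(\<forall>i\<in>{1..s}. \<forall>j\<in>{1..s}. i \<noteq> j \<longrightarrow> a i j \<noteq> 0 \<longrightarrow> a j i = 0)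
       \<and> (\<forall>i\<in>{1..s}. \<forall>j\<in>{1..s}. \<forall>k\<in>{1..s}. a i k \<noteq> 0 \<longrightarrow> a k j \<noteq> 0 \<longrightarrow> a i j \<noteq> 0)"
  using support_asym[of "{1..s}" a, OF rel] support_trans[of "{1..s}" a, OF rel] by blast

end
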